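(* Let $q$ be a prime power, $n=q^2-1$, and let $x\in\{1,\ldots,n-1\}$ be the minimal representative of its cyclotomic coset $I_x$, with $q$-adic representation $x=a_0+a_1q$, $0\le a_0,a_1<q$. Then $I_x$ is a symmetric coset if and only if $a_0+a_1=q-1$, and $I_x$ is an SR-asymmetric coset if and only if $a_0+a_1>q-1$.
   Context: Identify $\mathbb{Z}_n$ with $\{0,\ldots,n-1\}$. The cyclotomic coset of $x$ with respect to $q$ is $I_x=\{x,\,xq\bmod n\}$; its minimal representative is its least element. The (Euclidean) reciprocal coset of $I_x$ is $I_{n-x}$. $I_x$ is symmetric if $I_{n-x}=I_x$, and asymmetric otherwise. If $I_x$ is asymmetric with reciprocal coset $I_y$, where $x,y$ are the minimal representatives and $x<y$, then $I_x$ is the FR-asymmetric coset and $I_y$ the SR-asymmetric coset of the pair. *)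

theory Defs
  imports "HOL-Computational_Algebra.Primes"
begin

(* cyclotomic coset of x modulo n with respect to q, for n = q^2 - 1 *)
definition cyc_coset :: "nat \<Rightarrow> nat \<Rightarrow> nat \<Rightarrow> nat set" where
  "cyc_coset n q x = {x mod n, (x * q) mod n}"

definition min_rep :: "nat \<Rightarrow> nat \<Rightarrow> nat \<Rightarrow> nat" where
  "min_rep n q x = Min (cyc_coset n q x)"

(* reciprocal coset of I_x is I_{n-x} (n - x taken in Z_n) *)
definition symmetric_coset :: "nat \<Rightarrow> nat \<Rightarrow> nat \<Rightarrow> bool" where
  "symmetric_coset n q x \<longleftrightarrow> cyc_coset n q ((n - x) mod n) = cyc_coset n q x"

definition SR_asymmetric_coset :: "nat \<Rightarrow> nat \<Rightarrow> nat \<Rightarrow> bool" where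
  "SR_asymmetric_coset n q x \<longleftrightarrow> \<not> symmetric_coset n q x \<and>
     min_rep n q ((n - x) mod n) < min_rep n q x"

definition prime_power :: "nat \<Rightarrow> bool" where
  "prime_power q \<longleftrightarrow> (\<exists>p k. prime p \<and> k \<ge> 1 \<and> q = p ^ k)"

end

theory Submission
  imports Defs
begin

text \<open>Since \<open>q\<^sup>2 = 1\<close> modulo \<open>n\<close>,
  multiplication by \<open>q\<close> swaps the two digits, so \<open>I\<^sub>x\<close> consists of the two digit swaps of \<open>x\<close>
  and its minimal representative carries the smaller digit in the high position. The
  reciprocal \<open>n - x\<close> has the complementary digits \<open>q - 1 - a\<^sub>0\<close>, \<open>q - 1 - a\<^sub>1\<close>. Comparing digit
  pairs, \<open>I\<^sub>x = I\<^sub>n\<^sub>-\<^sub>x\<close> exactly when \<open>a\<^sub>0 + a\<^sub>1 = q - 1\<close>; and if \<open>a\<^sub>1 \<le> a\<^sub>0\<close>, the minimal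
  representative of the reciprocal coset has high digit \<open>q - 1 - a\<^sub>0\<close>, which is below \<open>a\<^sub>1\<close>
  exactly when \<open>a\<^sub>0 + a\<^sub>1 > q - 1\<close>.\<close>

lemma two_digit_less_iff:
  fixes q c0 c1 d0 d1 :: nat
  assumes "c0 < q" "d0 < q"
  shows "c0 + c1 * q < d0 + d1 * q \<longleftrightarrow> c1 < d1 \<or> c1 = d1 \<and> c0 < d0"
proof -
  have high_less: "u0 + u1 * q < v0 + v1 * q" if "u0 < q" "u1 < v1" for u0 u1 v0 v1 :: nat
  proof -
    have "Suc u1 * q \<le> v1 * q" using \<open>u1 < v1\<close> by (intro mult_right_mono) auto
    then show ?thesis using \<open>u0 < q\<close> by simp
  qed
  show ?thesis
    using high_less[OF assms(1), of c1 d1] high_less[OF assms(2), of d1 c1]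
    by (metis add_less_cancel_right less_asym linorder_neqE_nat)
qed

lemma two_digit_eq_iff:
  fixes q c0 c1 d0 d1 :: nat
  assumes "c0 < q" "d0 < q"
  shows "c0 + c1 * q = d0 + d1 * q \<longleftrightarrow> c0 = d0 \<and> c1 = d1"
  using two_digit_less_iff[OF assms, of c1 d1] two_digit_less_iff[OF assms(2,1), of d1 c1]
  by (metis linorder_neqE_nat less_irrefl)

lemma square_minus_one_two_digits: "(q::nat)\<^sup>2 - 1 = (q - 1) + (q - 1) * q"
  by (cases q) (simp_all add: power2_eq_square algebra_simps)

lemma two_digit_complement:
  fixes q c0 c1 :: nat
  assumes "c0 < q" "c1 < q"
  shows "q\<^sup>2 - 1 - (c0 + c1 * q) = (q - 1 - c0) + (q - 1 - c1) * q"
proof -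
  have "c0 + (q - 1 - c0) = q - 1" "c1 + (q - 1 - c1) = q - 1" using assms by auto
  then have "(c0 + c1 * q) + ((q - 1 - c0) + (q - 1 - c1) * q) = (q - 1) + (q - 1) * q"
    by (metis add.assoc add.left_commute add_mult_distrib)
  then show ?thesis unfolding square_minus_one_two_digits by linarith
qed

lemma two_digit_times_base_mod:
  fixes q n c0 c1 :: nat
  assumes n: "n = q\<^sup>2 - 1" and c: "c0 < q" "c1 < q" and less_n: "c0 + c1 * q < n"
  shows "(c0 + c1 * q) * q mod n = c1 + c0 * q"
proof -
  have q_pos: "q \<ge> 1" using c by simp
  have "q * q = n + 1" using n q_pos by (simp add: power2_eq_square)
  then have "(c0 + c1 * q) * q = (c1 + c0 * q) + c1 * n"
    by (simp add: algebra_simps)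
  moreover have "c1 + c0 * q < n"
  proof -
    have n_digits: "n = (q - 1) + (q - 1) * q"
      using n square_minus_one_two_digits by simp
    have "c1 + c0 * q \<le> n"
      unfolding n_digits using c by (intro add_mono mult_right_mono) auto
    moreover have "c1 + c0 * q \<noteq> n"
      \<comment> \<open>otherwise both digits are \<open>q - 1\<close>, and then also \<open>c0 + c1 * q = n\<close>\<close>
      using two_digit_eq_iff[of c1 q "q - 1" c0 "q - 1"] c q_pos less_n n_digits by auto
    ultimately show ?thesis by simp
  qed
  ultimately show ?thesis by simp
qed

lemma cyc_coset_two_digit:
  fixes q n c0 c1 :: nat
  assumes "n = q\<^sup>2 - 1" "c0 < q" "c1 < q" "c0 + c1 * q < n"
  shows "cyc_coset n q (c0 + c1 * q) = {c0 + c1 * q, c1 + c0 * q}"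
  using two_digit_times_base_mod[OF assms] assms(4) by (simp add: cyc_coset_def)

lemma min_rep_two_digit:
  fixes q n c0 c1 :: nat
  assumes "n = q\<^sup>2 - 1" "c0 < q" "c1 < q" "c0 + c1 * q < n"
  shows "min_rep n q (c0 + c1 * q) = max c0 c1 + min c0 c1 * q"
proof (cases "c0 \<le> c1")
  case True
  then have "c1 + c0 * q \<le> c0 + c1 * q"
    using two_digit_less_iff[of c0 q c1 c1 c0] assms(2,3) by auto
  then show ?thesis using True by (simp add: min_rep_def cyc_coset_two_digit[OF assms])
next
  case False
  then have "c0 + c1 * q < c1 + c0 * q"
    using two_digit_less_iff[of c0 q c1 c1 c0] assms(2,3) by auto
  then show ?thesis using False by (simp add: min_rep_def cyc_coset_two_digit[OF assms])
qed

lemma reciprocal_two_digit: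
  fixes q n c0 c1 :: nat
  assumes "n = q\<^sup>2 - 1" "c0 < q" "c1 < q" "0 < c0 + c1 * q" "c0 + c1 * q < n"
  shows "(n - (c0 + c1 * q)) mod n = (q - 1 - c0) + (q - 1 - c1) * q"
    and "(q - 1 - c0) + (q - 1 - c1) * q < n"
proof -
  have "n - (c0 + c1 * q) < n" using assms(4,5) by simp
  then show "(q - 1 - c0) + (q - 1 - c1) * q < n"
    and "(n - (c0 + c1 * q)) mod n = (q - 1 - c0) + (q - 1 - c1) * q"
    using two_digit_complement[OF assms(2,3)] assms(1) by simp_all
qed

lemma symmetric_coset_iff_digit_sum:
  fixes q n a0 a1 :: nat
  assumes n: "n = q\<^sup>2 - 1" and a: "a0 < q" "a1 < q"
    and x: "0 < a0 + a1 * q" "a0 + a1 * q < n"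
  shows "symmetric_coset n q (a0 + a1 * q) \<longleftrightarrow> a0 + a1 = q - 1"
proof -
  define b0 b1 where "b0 = q - 1 - a0" and "b1 = q - 1 - a1"
  have b: "b0 < q" "b1 < q" using a by (auto simp: b0_def b1_def)
  note reciprocal = reciprocal_two_digit[OF n a x, folded b0_def b1_def]
  have "symmetric_coset n q (a0 + a1 * q) \<longleftrightarrow>
      {b0 + b1 * q, b1 + b0 * q} = {a0 + a1 * q, a1 + a0 * q}"
    unfolding symmetric_coset_def reciprocal(1) cyc_coset_two_digit[OF n b reciprocal(2)]
      cyc_coset_two_digit[OF n a x(2)] ..
  also have "\<dots> \<longleftrightarrow> (b0 = a0 \<and> b1 = a1) \<or> (b0 = a1 \<and> b1 = a0)"
    unfolding doubleton_eq_iff two_digit_eq_iff[OF b(1) a(1)] two_digit_eq_iff[OF b(1) a(2)]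
      two_digit_eq_iff[OF b(2) a(1)] two_digit_eq_iff[OF b(2) a(2)]
    by blast
  also have "\<dots> \<longleftrightarrow> a0 + a1 = q - 1"
    using a by (auto simp: b0_def b1_def)
  finally show ?thesis .
qed

lemma SR_asymmetric_coset_iff_digit_sum:
  fixes q n a0 a1 :: nat
  assumes n: "n = q\<^sup>2 - 1" and a: "a0 < q" "a1 < q" "a1 \<le> a0"
    and x: "0 < a0 + a1 * q" "a0 + a1 * q < n"
  shows "SR_asymmetric_coset n q (a0 + a1 * q) \<longleftrightarrow> a0 + a1 > q - 1"
proof -
  define b0 b1 where "b0 = q - 1 - a0" and "b1 = q - 1 - a1"
  have b: "b0 < q" "b1 < q" "b0 \<le> b1" using a by (auto simp: b0_def b1_def)
  note reciprocal = reciprocal_two_digit[OF n a(1,2) x, folded b0_def b1_def]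
  have "min_rep n q ((n - (a0 + a1 * q)) mod n) = b1 + b0 * q"
    using min_rep_two_digit[OF n b(1,2) reciprocal(2)] b(3) by (simp add: reciprocal(1))
  moreover have "min_rep n q (a0 + a1 * q) = a0 + a1 * q"
    using min_rep_two_digit[OF n a(1,2) x(2)] a(3) by simp
  ultimately have "min_rep n q ((n - (a0 + a1 * q)) mod n) < min_rep n q (a0 + a1 * q) \<longleftrightarrow>
      b0 < a1 \<or> b0 = a1 \<and> b1 < a0"
    using two_digit_less_iff[OF b(2) a(1)] by simp
  then show ?thesis
    unfolding SR_asymmetric_coset_def symmetric_coset_iff_digit_sum[OF n a(1,2) x]
    using a by (auto simp: b0_def b1_def)
qed

theorem mainTheorem6:
  fixes q n x a0 a1 :: nat
  assumes "prime_power q"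
    and "n = q^2 - 1"
    and "1 \<le> x" and "x \<le> n - 1"
    and "x = min_rep n q x"
    and "a0 < q" and "a1 < q" and "x = a0 + a1 * q"
  shows "(symmetric_coset n q x \<longleftrightarrow> a0 + a1 = q - 1)
       \<and> (SR_asymmetric_coset n q x \<longleftrightarrow> a0 + a1 > q - 1)"
proof -
  have x: "0 < a0 + a1 * q" "a0 + a1 * q < n" using assms(3,4,8) by auto
  have "a0 + a1 * q = max a0 a1 + min a0 a1 * q"
    using assms(5,8) min_rep_two_digit[OF assms(2,6,7) x(2)] by simp
  then have "a1 \<le> a0"
    using two_digit_eq_iff[of a0 q "max a0 a1" a1 "min a0 a1"] assms(6,7) by (auto simp: min_def split: if_splits)
  then show ?thesis
    using symmetric_coset_iff_digit_sum[OF assms(2,6,7) x]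
      SR_asymmetric_coset_iff_digit_sum[OF assms(2,6,7) _ x] assms(8) by simp
qed

end
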